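(* Let $\mathcal{A}=\mathcal{A}_1\oplus\cdots\oplus\mathcal{A}_d$ with $d>1$ and each $\mathcal{A}_i$ a unital simple C*-algebra, and let $X$ be a Hilbert $\mathcal{A}$-bimodule, full and finite projective as a right $\mathcal{A}$-module. Then $\mathcal{A}$ is $X$-simple if and only if the associated matrix $A$ is irreducible.
   Context: A Hilbert $\mathcal{A}$-bimodule is a right Hilbert $\mathcal{A}$-module $X$ (inner product $(\cdot|\cdot)_{\mathcal{A}}$) with an injective $*$-homomorphism $\phi:\mathcal{A}\to\mathcal{L}_{\mathcal{A}}(X_{\mathcal{A}})$. Let $p_1,\dots,p_d$ be the minimal central projections of $\mathcal{A}$ and $r(p_j)\in\mathcal{L}_{\mathcal{A}}(X_{\mathcal A})$ the map $x\mapsto xp_j$. The associated matrix $A\in M_d(\{0,1\})$ has $A(i,j)=1$ if $\phi(p_i)r(p_j)\neq0$ and $0$ otherwise; $A$ is irreducible if for all $i,j$ there is $n\in\mathbb{N}$ with $A^n(i,j)>0$. A closed ideal $J\subseteq\mathcal{A}$ is $X$-invariant if $(x|\phi(a)y)_{\mathcal{A}}\in J$ for all $x,y\in X$, $a\in J$; $\mathcal{A}$ is $X$-simple if its only $X$-invariant closed ideals are $0$ and $\mathcal{A}$. *)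

theory Defs
  imports "HOL-Analysis.Analysis"
begin

text \<open>A unital C*-algebra is modelled on a type of class real_normed_algebra_1 + banach
(a unital real Banach algebra with norm 1 = 1), together with an explicit complex scalar
multiplication cs compatible with the real one and with the product, and an involution st
satisfying the C*-identity.\<close>

definition cstar_algebra :: "(complex \<Rightarrow> 'a::{real_normed_algebra_1,banach} \<Rightarrow> 'a) \<Rightarrow> ('a \<Rightarrow> 'a) \<Rightarrow> bool" where
  "cstar_algebra cs st \<longleftrightarrow>
     (\<forall>r a. cs (complex_of_real r) a = scaleR r a) \<and>
     (\<forall>c d a. cs (c * d) a = cs c (cs d a)) \<and>
     (\<forall>c d a. cs (c + d) a = cs c a + cs d a) \<and>
     (\<forall>c a b. cs c (a + b) = cs c a + cs c b) \<and>
     (\<forall>c a b. cs c (a * b) = cs c a * b) \<and>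
     (\<forall>c a b. cs c (a * b) = a * cs c b) \<and>
     (\<forall>c a. norm (cs c a) = cmod c * norm a) \<and>
     (\<forall>a. st (st a) = a) \<and>
     (\<forall>a b. st (a + b) = st a + st b) \<and>
     (\<forall>a b. st (a * b) = st b * st a) \<and>
     (\<forall>c a. st (cs c a) = cs (cnj c) (st a)) \<and>
     (\<forall>a. norm (st a * a) = norm a ^ 2)"

definition positive_elt :: "('a::{real_normed_algebra_1} \<Rightarrow> 'a) \<Rightarrow> 'a \<Rightarrow> bool" where
  "positive_elt st a \<longleftrightarrow> (\<exists>b. a = st b * b)"

definition closed_ideal_in :: "(complex \<Rightarrow> 'a::{real_normed_algebra_1} \<Rightarrow> 'a) \<Rightarrow> 'a set \<Rightarrow> 'a set \<Rightarrow> bool" where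
  "closed_ideal_in cs B J \<longleftrightarrow>
     J \<subseteq> B \<and> closed J \<and> 0 \<in> J \<and>
     (\<forall>x\<in>J. \<forall>y\<in>J. x + y \<in> J) \<and> (\<forall>x\<in>J. - x \<in> J) \<and>
     (\<forall>c. \<forall>x\<in>J. cs c x \<in> J) \<and>
     (\<forall>b\<in>B. \<forall>j\<in>J. b * j \<in> J \<and> j * b \<in> J)"

definition corner :: "'a::{real_normed_algebra_1} \<Rightarrow> 'a set" where
  "corner p = range (\<lambda>a. p * a)"

text \<open>A is the direct sum A_1 + ... + A_d of unital simple C*-algebras, with A_i = p_i A,
where p_0,...,p_(d-1) are nonzero pairwise orthogonal central projections summing to 1
and each summand p_i A is simple (its only closed ideals are 0 and itself).  Then the
p_i are exactly the minimal central projections of A.\<close>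
definition simple_sum_decomp :: "(complex \<Rightarrow> 'a::{real_normed_algebra_1,banach} \<Rightarrow> 'a) \<Rightarrow> ('a \<Rightarrow> 'a) \<Rightarrow> nat \<Rightarrow> (nat \<Rightarrow> 'a) \<Rightarrow> bool" where
  "simple_sum_decomp cs st d p \<longleftrightarrow>
     (\<forall>i<d. p i * p i = p i \<and> st (p i) = p i \<and> p i \<noteq> 0 \<and> (\<forall>a. p i * a = a * p i)) \<and>
     (\<forall>i<d. \<forall>j<d. i \<noteq> j \<longrightarrow> p i * p j = 0) \<and>
     (\<Sum>i<d. p i) = 1 \<and>
     (\<forall>i<d. \<forall>J. closed_ideal_in cs (corner (p i)) J \<longrightarrow> J = {0} \<or> J = corner (p i))"

text \<open>Right Hilbert A-module: complex vector space X (complex scaling xs) with right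
A-action rm and A-valued inner product ip (linear in the second variable), complete
for the norm sqrt(norm (ip x x)).\<close>
definition hilbert_module ::
  "(complex \<Rightarrow> 'a::{real_normed_algebra_1,banach} \<Rightarrow> 'a) \<Rightarrow> ('a \<Rightarrow> 'a) \<Rightarrow>
   (complex \<Rightarrow> 'x::ab_group_add \<Rightarrow> 'x) \<Rightarrow> ('x \<Rightarrow> 'a \<Rightarrow> 'x) \<Rightarrow> ('x \<Rightarrow> 'x \<Rightarrow> 'a) \<Rightarrow> bool" where
  "hilbert_module cs st xs rm ip \<longleftrightarrow>
     (\<forall>c d x. xs (c * d) x = xs c (xs d x)) \<and>
     (\<forall>c d x. xs (c + d) x = xs c x + xs d x) \<and>
     (\<forall>c x y. xs c (x + y) = xs c x + xs c y) \<and>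
     (\<forall>x. xs 1 x = x) \<and>
     (\<forall>x y a. rm (x + y) a = rm x a + rm y a) \<and>
     (\<forall>x a b. rm x (a + b) = rm x a + rm x b) \<and>
     (\<forall>x a b. rm x (a * b) = rm (rm x a) b) \<and>
     (\<forall>c x a. xs c (rm x a) = rm (xs c x) a) \<and>
     (\<forall>c x a. xs c (rm x a) = rm x (cs c a)) \<and>
     (\<forall>x y z. ip x (y + z) = ip x y + ip x z) \<and>
     (\<forall>c x y. ip x (xs c y) = cs c (ip x y)) \<and>
     (\<forall>x y a. ip x (rm y a) = ip x y * a) \<and>
     (\<forall>x y. st (ip x y) = ip y x) \<and>
     (\<forall>x. positive_elt st (ip x x)) \<and>
     (\<forall>x. ip x x = 0 \<longrightarrow> x = 0) \<and>
     (\<forall>f :: nat \<Rightarrow> 'x.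
        (\<forall>e>0. \<exists>N. \<forall>m\<ge>N. \<forall>n\<ge>N. sqrt (norm (ip (f m - f n) (f m - f n))) < e) \<longrightarrow>
        (\<exists>l. (\<lambda>n. sqrt (norm (ip (f n - l) (f n - l)))) \<longlonglongrightarrow> 0))"

definition adjointable :: "('x \<Rightarrow> 'x \<Rightarrow> 'a) \<Rightarrow> ('x \<Rightarrow> 'x) \<Rightarrow> bool" where
  "adjointable ip T \<longleftrightarrow> (\<exists>S. \<forall>x y. ip (T x) y = ip x (S y))"

definition hilbert_bimodule ::
  "(complex \<Rightarrow> 'a::{real_normed_algebra_1,banach} \<Rightarrow> 'a) \<Rightarrow> ('a \<Rightarrow> 'a) \<Rightarrow>
   (complex \<Rightarrow> 'x::ab_group_add \<Rightarrow> 'x) \<Rightarrow> ('x \<Rightarrow> 'a \<Rightarrow> 'x) \<Rightarrow> ('x \<Rightarrow> 'x \<Rightarrow> 'a) \<Rightarrow>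
   ('a \<Rightarrow> 'x \<Rightarrow> 'x) \<Rightarrow> bool" where
  "hilbert_bimodule cs st xs rm ip phi \<longleftrightarrow>
     hilbert_module cs st xs rm ip \<and>
     (\<forall>a. adjointable ip (phi a)) \<and>
     (\<forall>a b x. phi (a + b) x = phi a x + phi b x) \<and>
     (\<forall>c a x. phi (cs c a) x = xs c (phi a x)) \<and>
     (\<forall>a b x. phi (a * b) x = phi a (phi b x)) \<and>
     (\<forall>a x y. ip (phi a x) y = ip x (phi (st a) y)) \<and>
     inj phi"

definition full_module :: "(complex \<Rightarrow> 'a::{real_normed_algebra_1} \<Rightarrow> 'a) \<Rightarrow> ('x \<Rightarrow> 'x \<Rightarrow> 'a) \<Rightarrow> bool" where
  "full_module cs ip \<longleftrightarrow>
     closure {\<Sum>k<n. cs (c k) (ip (f k) (g k)) | (n::nat) c f g. True} = UNIV"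

text \<open>Finite projective: X is a finitely generated projective right A-module, i.e. a direct
summand of the free module A^n: there are right A-linear maps i : X \<rightarrow> A^n and
q : A^n \<rightarrow> X with q \<circ> i = id.  (A^n is represented by functions nat \<Rightarrow> 'a vanishing from n on.)\<close>
definition finite_projective :: "('x::ab_group_add \<Rightarrow> 'a::{real_normed_algebra_1} \<Rightarrow> 'x) \<Rightarrow> bool" where
  "finite_projective rm \<longleftrightarrow>
     (\<exists>(n::nat) (i :: 'x \<Rightarrow> nat \<Rightarrow> 'a) (q :: (nat \<Rightarrow> 'a) \<Rightarrow> 'x).
        (\<forall>x k. n \<le> k \<longrightarrow> i x k = 0) \<and>
        (\<forall>x y. i (x + y) = (\<lambda>k. i x k + i y k)) \<and>
        (\<forall>x a. i (rm x a) = (\<lambda>k. i x k * a)) \<and>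
        (\<forall>u v. q (\<lambda>k. u k + v k) = q u + q v) \<and>
        (\<forall>u a. q (\<lambda>k. u k * a) = rm (q u) a) \<and>
        (\<forall>x. q (i x) = x))"

definition X_invariant :: "('x \<Rightarrow> 'x \<Rightarrow> 'a) \<Rightarrow> ('a \<Rightarrow> 'x \<Rightarrow> 'x) \<Rightarrow> 'a set \<Rightarrow> bool" where
  "X_invariant ip phi J \<longleftrightarrow> (\<forall>x y a. a \<in> J \<longrightarrow> ip x (phi a y) \<in> J)"

definition X_simple :: "(complex \<Rightarrow> 'a::{real_normed_algebra_1} \<Rightarrow> 'a) \<Rightarrow> ('x \<Rightarrow> 'x \<Rightarrow> 'a) \<Rightarrow> ('a \<Rightarrow> 'x \<Rightarrow> 'x) \<Rightarrow> bool" where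
  "X_simple cs ip phi \<longleftrightarrow>
     (\<forall>J. closed_ideal_in cs UNIV J \<and> X_invariant ip phi J \<longrightarrow> J = {0} \<or> J = UNIV)"

text \<open>Indices 0..d-1 correspond to p_1..p_d.  A(i,j) = 1 iff phi(p_i) r(p_j) \<noteq> 0.\<close>
definition assoc_matrix :: "('x::zero \<Rightarrow> 'a \<Rightarrow> 'x) \<Rightarrow> ('a \<Rightarrow> 'x \<Rightarrow> 'x) \<Rightarrow> (nat \<Rightarrow> 'a) \<Rightarrow> nat \<Rightarrow> nat \<Rightarrow> nat" where
  "assoc_matrix rm phi p i j = (if (\<lambda>x. phi (p i) (rm x (p j))) \<noteq> (\<lambda>x. 0) then 1 else 0)"

fun mat_pow :: "nat \<Rightarrow> (nat \<Rightarrow> nat \<Rightarrow> nat) \<Rightarrow> nat \<Rightarrow> nat \<Rightarrow> nat \<Rightarrow> nat" where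
  "mat_pow d M 0 i j = (if i = j then 1 else 0)"
| "mat_pow d M (Suc n) i j = (\<Sum>k<d. mat_pow d M n i k * M k j)"

definition irreducible_matrix :: "nat \<Rightarrow> (nat \<Rightarrow> nat \<Rightarrow> nat) \<Rightarrow> bool" where
  "irreducible_matrix d M \<longleftrightarrow> (\<forall>i<d. \<forall>j<d. \<exists>n\<ge>1. mat_pow d M n i j > 0)"

end

theory Submission
  imports Defs
begin

text \<open>Since every summand \<open>p\<^sub>k A\<close> is simple, a closed ideal \<open>J\<close> of \<open>A\<close> that meets \<open>p\<^sub>k A\<close>
nontrivially contains \<open>p\<^sub>k\<close>. If \<open>J\<close> is \<open>X\<close>-invariant and \<open>p\<^sub>i \<in> J\<close>, then for every
\<open>z = \<phi>(p\<^sub>i)(y p\<^sub>j) \<noteq> 0\<close> the element \<open>(z|z) = (\<phi>(p\<^sub>i) z | y) p\<^sub>j\<close> is a nonzero element of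
\<open>J \<inter> p\<^sub>j A\<close>, so \<open>p\<^sub>j \<in> J\<close>: the indices of the projections in \<open>J\<close> are closed under the
edges \<open>i \<rightarrow> j\<close> with \<open>A(i,j) = 1\<close>. Conversely, for an index set \<open>S\<close> closed under these edges, the ideal
\<open>{a. p\<^sub>k a = 0 for k \<notin> S}\<close> is \<open>X\<close>-invariant. So \<open>A\<close> is \<open>X\<close>-simple iff the only nonempty
edge-closed index set is the whole one, which for \<open>d > 1\<close> means that \<open>A\<close> is irreducible.\<close>

definition successor_closed :: "nat \<Rightarrow> (nat \<Rightarrow> nat \<Rightarrow> nat) \<Rightarrow> nat set \<Rightarrow> bool" where
  "successor_closed d M S \<longleftrightarrow> (\<forall>l\<in>S. \<forall>k<d. 0 < M l k \<longrightarrow> k \<in> S)"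

lemma mat_pow_Suc_pos_iff:
  "0 < mat_pow d M (Suc n) i j \<longleftrightarrow> (\<exists>k<d. 0 < mat_pow d M n i k \<and> 0 < M k j)"
  by (simp add: sum_eq_0_iff flip: neq0_conv) auto

lemma mat_pow_pos_in_successor_closed:
  assumes "successor_closed d M S" "i \<in> S" "j < d" "0 < mat_pow d M n i j"
  shows "j \<in> S"
  using assms(3,4)
proof (induction n arbitrary: j)
  case 0
  then show ?case using assms(2) by (simp split: if_splits)
next
  case (Suc n)
  then obtain k where "k < d" "0 < mat_pow d M n i k" "0 < M k j"
    using mat_pow_Suc_pos_iff by blast
  with Suc.IH Suc.prems(1) assms(1) show ?case
    unfolding successor_closed_def by blast
qed

lemma irreducible_matrix_iff_successor_closed:
  assumes "1 < d"
  shows "irreducible_matrix d M \<longleftrightarrow>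
    (\<forall>S \<subseteq> {..<d}. successor_closed d M S \<and> S \<noteq> {} \<longrightarrow> S = {..<d})"
proof (intro iffI allI impI)
  fix S assume irr: "irreducible_matrix d M" and S: "S \<subseteq> {..<d}" "successor_closed d M S \<and> S \<noteq> {}"
  then obtain i where i: "i \<in> S" by blast
  have "k \<in> S" if k: "k < d" for k
  proof -
    have "i < d" using i S(1) by blast
    then obtain n where "0 < mat_pow d M n i k"
      using irr k unfolding irreducible_matrix_def by blast
    then show ?thesis using mat_pow_pos_in_successor_closed[of d M S i k n] S(2) i k by blast
  qed
  with S(1) show "S = {..<d}" by blast
next
  assume closed_full: "\<forall>S \<subseteq> {..<d}. successor_closed d M S \<and> S \<noteq> {} \<longrightarrow> S = {..<d}"
  show "irreducible_matrix d M"
    unfolding irreducible_matrix_def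
  proof (rule ccontr)
    assume "\<not> (\<forall>i<d. \<forall>j<d. \<exists>n\<ge>1. 0 < mat_pow d M n i j)"
    then obtain i j where ij: "i < d" "j < d" and no_path: "\<forall>n\<ge>1. mat_pow d M n i j = 0"
      by auto
    define R where "R = {k. k < d \<and> (\<exists>n\<ge>1. 0 < mat_pow d M n i k)}"
    have successor_in_R: "k \<in> R" if "0 < mat_pow d M n i l" "k < d" "0 < M l k" "l < d" for n l k
    proof -
      have "0 < mat_pow d M (Suc n) i k" using that mat_pow_Suc_pos_iff by blast
      then show ?thesis unfolding R_def using that(2) by (intro CollectI conjI exI[of _ "Suc n"]) auto
    qed
    show False
    proof (cases "R = {}")
      case False
      have "successor_closed d M R"
        using successor_in_R unfolding successor_closed_def R_def by blast
      moreover have "R \<subseteq> {..<d}" unfolding R_def by auto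
      ultimately have "R = {..<d}" using closed_full False by blast
      then have "j \<in> R" using ij(2) by blast
      then show False using no_path unfolding R_def by auto
    next
      case True
      \<comment> \<open>then \<open>i\<close> has no successors, so \<open>{i}\<close> is a proper closed set\<close>
      have "successor_closed d M {i}"
        unfolding successor_closed_def using successor_in_R[of 0 i] True ij by auto
      then have "{i} = {..<d}" using closed_full ij(1) by blast
      moreover have "{0, 1} \<subseteq> {..<d}" using assms by auto
      ultimately show False by (metis insert_subset singletonD zero_neq_one)
    qed
  qed
qed

lemma closed_ideal_inD:
  assumes "closed_ideal_in cs B J"
  shows "J \<subseteq> B" "closed J" "0 \<in> J"
    and "x \<in> J \<Longrightarrow> y \<in> J \<Longrightarrow> x + y \<in> J"
    and "x \<in> J \<Longrightarrow> - x \<in> J"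
    and "x \<in> J \<Longrightarrow> cs c x \<in> J"
    and "b \<in> B \<Longrightarrow> j \<in> J \<Longrightarrow> b * j \<in> J"
    and "b \<in> B \<Longrightarrow> j \<in> J \<Longrightarrow> j * b \<in> J"
  using assms unfolding closed_ideal_in_def by meson+

lemma closed_ideal_in_sum:
  assumes "closed_ideal_in cs B J" "\<And>k. k \<in> K \<Longrightarrow> f k \<in> J"
  shows "(\<Sum>k\<in>K. f k) \<in> J"
  using assms(2)
  by (induction K rule: infinite_finite_induct) (auto intro: closed_ideal_inD[OF assms(1)])

lemma cstar_algebraD:
  assumes "cstar_algebra cs st"
  shows "cs c (a * b) = a * cs c b" "cs c (a + b) = cs c a + cs c b" "st (st a) = a"
  using assms unfolding cstar_algebra_def by blast+

lemma simple_sum_decompD: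
  assumes "simple_sum_decomp cs st d p"
  shows "k < d \<Longrightarrow> p k * p k = p k"
    and "k < d \<Longrightarrow> p k \<noteq> 0"
    and "k < d \<Longrightarrow> p k * a = a * p k"
    and "k < d \<Longrightarrow> l < d \<Longrightarrow> k \<noteq> l \<Longrightarrow> p k * p l = 0"
    and "(\<Sum>k<d. p k) = 1"
    and "k < d \<Longrightarrow> closed_ideal_in cs (corner (p k)) J \<Longrightarrow> J = {0} \<or> J = corner (p k)"
  using assms unfolding simple_sum_decomp_def by meson+

locale simple_sum_algebra =
  fixes cs :: "complex \<Rightarrow> 'a::{real_normed_algebra_1,banach} \<Rightarrow> 'a"
    and st :: "'a \<Rightarrow> 'a"
    and d :: nat and p :: "nat \<Rightarrow> 'a"
  assumes cstar: "cstar_algebra cs st"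
    and decomp: "simple_sum_decomp cs st d p"
begin

lemmas cs_mult_right = cstar_algebraD(1)[OF cstar]
  and st_st = cstar_algebraD(3)[OF cstar]
  and p_idem = simple_sum_decompD(1)[OF decomp]
  and p_nonzero = simple_sum_decompD(2)[OF decomp]
  and p_central = simple_sum_decompD(3)[OF decomp]
  and p_orthogonal = simple_sum_decompD(4)[OF decomp]
  and sum_p = simple_sum_decompD(5)[OF decomp]
  and corner_simple = simple_sum_decompD(6)[OF decomp]

lemma cs_zero: "cs c 0 = 0"
  using cstar_algebraD(2)[OF cstar, of c 0 0] by simp

lemma sum_p_mult: "(\<Sum>k<d. p k * a) = a"
  by (simp add: sum_p flip: sum_distrib_right)

lemma corner_eq: "k < d \<Longrightarrow> corner (p k) = {a. p k * a = a}"
  unfolding corner_def by (auto simp: p_idem mult.assoc[symmetric]) (metis rangeI)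

lemma closed_corner: "k < d \<Longrightarrow> closed (corner (p k))"
  unfolding corner_eq by (intro closed_Collect_eq continuous_intros)

lemma closed_ideal_inter_corner:
  assumes J: "closed_ideal_in cs UNIV J" and k: "k < d"
  shows "closed_ideal_in cs (corner (p k)) (J \<inter> corner (p k))"
proof -
  have "p k * (x + y) = x + y" if "p k * x = x" "p k * y = y" for x y
    using that by (simp add: distrib_left)
  moreover have "p k * - x = - x" if "p k * x = x" for x
    using that by simp
  moreover have "p k * cs c x = cs c x" if "p k * x = x" for c x
    using that by (metis cs_mult_right)
  moreover have "p k * (b * j) = b * j" "p k * (j * b) = j * b" if "p k * j = j" for b j
    using that p_central[OF k] by (metis mult.assoc)+
  ultimately show ?thesis
    unfolding closed_ideal_in_def corner_eq[OF k]
    using closed_corner[OF k] closed_ideal_inD[OF J]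
    by (auto simp: corner_eq[OF k] simp del: minus_mult_right)
qed

lemma p_in_ideal:
  assumes J: "closed_ideal_in cs UNIV J" and k: "k < d"
    and w: "w \<in> J" "w \<noteq> 0" "p k * w = w"
  shows "p k \<in> J"
proof -
  have "w \<in> J \<inter> corner (p k)" using w corner_eq[OF k] by simp
  then have "J \<inter> corner (p k) = corner (p k)"
    using corner_simple[OF k closed_ideal_inter_corner[OF J k]] w(2) by auto
  moreover have "p k \<in> corner (p k)" using corner_eq[OF k] p_idem[OF k] by simp
  ultimately show ?thesis by blast
qed

lemma nonzero_ideal_contains_p:
  assumes J: "closed_ideal_in cs UNIV J" and "J \<noteq> {0}"
  obtains i where "i < d" "p i \<in> J"
proof -
  obtain a where a: "a \<in> J" "a \<noteq> 0" using assms closed_ideal_inD(3) by blast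
  have "\<exists>i<d. p i * a \<noteq> 0"
  proof (rule ccontr)
    assume "\<not> (\<exists>i<d. p i * a \<noteq> 0)"
    then have "(\<Sum>k<d. p k * a) = 0" by simp
    with a(2) show False by (simp add: sum_p_mult)
  qed
  then obtain i where i: "i < d" "p i * a \<noteq> 0" by blast
  have "p i * a \<in> J" using closed_ideal_inD(7)[OF J _ a(1)] by simp
  moreover have "p i * (p i * a) = p i * a" by (simp add: p_idem[OF i(1)] mult.assoc[symmetric])
  ultimately show ?thesis using that p_in_ideal[OF J i(1)] i by blast
qed

lemma ideal_eq_UNIV_if_all_p:
  assumes J: "closed_ideal_in cs UNIV J" and all_p: "\<And>k. k < d \<Longrightarrow> p k \<in> J"
  shows "J = UNIV"
proof -
  have "1 \<in> J" using closed_ideal_in_sum[OF J, of "{..<d}" p] all_p sum_p by simp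
  then have "b \<in> J" for b using closed_ideal_inD(8)[OF J, of b 1] by simp
  then show ?thesis by blast
qed

definition support_ideal :: "nat set \<Rightarrow> 'a set" where
  "support_ideal S = {a. \<forall>k<d. k \<notin> S \<longrightarrow> p k * a = 0}"

lemma closed_ideal_support_ideal: "closed_ideal_in cs UNIV (support_ideal S)"
proof -
  have "support_ideal S = (\<Inter>k\<in>{k. k < d \<and> k \<notin> S}. {a. p k * a = 0})"
    unfolding support_ideal_def by auto
  then have "closed (support_ideal S)"
    by (auto intro!: closed_Collect_eq continuous_intros)
  moreover have "p k * (b * j) = b * (p k * j)" if "k < d" for k b j
    using p_central[OF that] by (metis mult.assoc)
  moreover have "p k * (j * b) = (p k * j) * b" for k b j
    by (simp only: mult.assoc)
  moreover have "p k * cs c x = cs c (p k * x)" for k c x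
    by (simp only: cs_mult_right)
  ultimately show ?thesis
    unfolding closed_ideal_in_def support_ideal_def
    by (simp add: distrib_left cs_zero)
qed

lemma support_ideal_proper:
  assumes "i < d" "i \<in> S" "k < d" "k \<notin> S"
  shows "support_ideal S \<noteq> {0}" "support_ideal S \<noteq> UNIV"
proof -
  have "p i \<in> support_ideal S"
    unfolding support_ideal_def using assms p_orthogonal by blast
  then show "support_ideal S \<noteq> {0}" using assms p_nonzero by blast
  have "1 \<notin> support_ideal S"
    unfolding support_ideal_def using assms p_nonzero by auto
  then show "support_ideal S \<noteq> UNIV" by blast
qed

end

lemma hilbert_bimoduleD:
  assumes "hilbert_bimodule cs st xs rm ip phi"
  shows "ip x (y + z) = ip x y + ip x z"
    and "ip x (rm y a) = ip x y * a"
    and "ip x x = 0 \<Longrightarrow> x = 0"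
    and "phi (a + b) x = phi a x + phi b x"
    and "phi (a * b) x = phi a (phi b x)"
    and "ip (phi a x) y = ip x (phi (st a) y)"
  using assms unfolding hilbert_bimodule_def hilbert_module_def by meson+

locale simple_sum_bimodule = simple_sum_algebra cs st d p
  for cs :: "complex \<Rightarrow> 'a::{real_normed_algebra_1,banach} \<Rightarrow> 'a"
    and st :: "'a \<Rightarrow> 'a"
    and d :: nat and p :: "nat \<Rightarrow> 'a" +
  fixes xs :: "complex \<Rightarrow> 'x::ab_group_add \<Rightarrow> 'x"
    and rm :: "'x \<Rightarrow> 'a \<Rightarrow> 'x" and ip :: "'x \<Rightarrow> 'x \<Rightarrow> 'a" and phi :: "'a \<Rightarrow> 'x \<Rightarrow> 'x"
  assumes bimodule: "hilbert_bimodule cs st xs rm ip phi"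
begin

lemmas ip_add = hilbert_bimoduleD(1)[OF bimodule]
  and ip_rm = hilbert_bimoduleD(2)[OF bimodule]
  and ip_nondegenerate = hilbert_bimoduleD(3)[OF bimodule]
  and phi_add = hilbert_bimoduleD(4)[OF bimodule]
  and phi_mult = hilbert_bimoduleD(5)[OF bimodule]
  and phi_adjoint = hilbert_bimoduleD(6)[OF bimodule]

lemma ip_zero: "ip x 0 = 0"
  using ip_add[of x 0 0] by simp

lemma phi_zero: "phi 0 x = 0"
  using phi_add[of 0 0 x] by simp

lemma phi_zero_right: "phi a 0 = 0"
  using phi_mult[of a 0 0] by (simp add: phi_zero)

lemma phi_sum: "phi (\<Sum>l\<in>L. f l) x = (\<Sum>l\<in>L. phi (f l) x)"
  by (induction L rule: infinite_finite_induct) (auto simp: phi_zero phi_add)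

lemma ip_phi_swap: "ip x (phi a y) = ip (phi (st a) x) y"
  using phi_adjoint[of "st a" x y] by (simp add: st_st)

abbreviation M :: "nat \<Rightarrow> nat \<Rightarrow> nat" where
  "M \<equiv> assoc_matrix rm phi p"

lemma assoc_matrix_pos_iff: "0 < M l k \<longleftrightarrow> (\<exists>y. phi (p l) (rm y (p k)) \<noteq> 0)"
  unfolding assoc_matrix_def by (auto simp: fun_eq_iff)

lemma X_invariant_support_ideal:
  assumes "successor_closed d M S"
  shows "X_invariant ip phi (support_ideal S)"
  unfolding X_invariant_def
proof (intro allI impI)
  fix x y a assume a: "a \<in> support_ideal S"
  have "p k * ip x (phi a y) = 0" if k: "k < d" "k \<notin> S" for k
  proof -
    have "phi (p l * a) (rm y (p k)) = 0" if l: "l < d" for l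
    proof (cases "l \<in> S")
      case True
      then have "phi (p l) (rm y (p k)) = 0"
        using assms k assoc_matrix_pos_iff unfolding successor_closed_def by blast
      then show ?thesis by (simp add: p_central[OF l] phi_mult phi_zero_right)
    next
      case False
      then show ?thesis using a l unfolding support_ideal_def by (simp add: phi_zero)
    qed
    then have "phi a (rm y (p k)) = 0"
      using phi_sum[of "\<lambda>l. p l * a" "{..<d}"] by (simp add: sum_p_mult)
    then have "ip x (phi a (rm y (p k))) = 0" by (simp add: ip_zero)
    then show ?thesis by (simp add: ip_phi_swap ip_rm p_central[OF k(1)])
  qed
  then show "ip x (phi a y) \<in> support_ideal S" unfolding support_ideal_def by blast
qed

lemma successor_closed_ideal_indices:
  assumes J: "closed_ideal_in cs UNIV J" and inv: "X_invariant ip phi J"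
  shows "successor_closed d M {k. k < d \<and> p k \<in> J}"
  unfolding successor_closed_def
proof (intro ballI allI impI)
  fix l k assume l: "l \<in> {k. k < d \<and> p k \<in> J}" and k: "k < d" and "0 < M l k"
  then obtain y where "phi (p l) (rm y (p k)) \<noteq> 0" using assoc_matrix_pos_iff by blast
  then obtain z where z: "z = phi (p l) (rm y (p k))" "ip z z \<noteq> 0"
    using ip_nondegenerate by blast
  have "ip z z \<in> J" using inv l z(1) unfolding X_invariant_def by blast
  moreover have "p k * ip z z = ip z z"
  proof -
    have "ip z z = ip (phi (st (p l)) z) y * p k" by (simp add: z(1) ip_phi_swap ip_rm)
    then show ?thesis by (metis p_central[OF k] p_idem[OF k] mult.assoc)
  qed
  ultimately have "p k \<in> J" using p_in_ideal[OF J k] z(2) by blast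
  with k show "k \<in> {k. k < d \<and> p k \<in> J}" by simp
qed

lemma X_simple_iff_successor_closed:
  "X_simple cs ip phi \<longleftrightarrow>
    (\<forall>S \<subseteq> {..<d}. successor_closed d M S \<and> S \<noteq> {} \<longrightarrow> S = {..<d})"
proof (intro iffI allI impI)
  fix S assume simple: "X_simple cs ip phi"
    and S: "S \<subseteq> {..<d}" "successor_closed d M S \<and> S \<noteq> {}"
  then obtain i where i: "i < d" "i \<in> S" by blast
  have "k \<in> S" if k: "k < d" for k
  proof (rule ccontr)
    assume "k \<notin> S"
    have "X_invariant ip phi (support_ideal S)"
      using X_invariant_support_ideal S(2) by blast
    then have "support_ideal S = {0} \<or> support_ideal S = UNIV"
      using simple closed_ideal_support_ideal unfolding X_simple_def by blast
    with support_ideal_proper[OF i k \<open>k \<notin> S\<close>] show False by blast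
  qed
  with S(1) show "S = {..<d}" by blast
next
  assume closed_full: "\<forall>S \<subseteq> {..<d}. successor_closed d M S \<and> S \<noteq> {} \<longrightarrow> S = {..<d}"
  show "X_simple cs ip phi"
    unfolding X_simple_def
  proof (intro allI impI)
    fix J assume "closed_ideal_in cs UNIV J \<and> X_invariant ip phi J"
    then have J: "closed_ideal_in cs UNIV J" "X_invariant ip phi J" by blast+
    show "J = {0} \<or> J = UNIV"
    proof (cases "J = {0}")
      case False
      then obtain i where "i < d" "p i \<in> J" using nonzero_ideal_contains_p[OF J(1)] by blast
      then have "{k. k < d \<and> p k \<in> J} \<noteq> {}" by blast
      moreover have "{k. k < d \<and> p k \<in> J} \<subseteq> {..<d}" by blast
      ultimately have "{k. k < d \<and> p k \<in> J} = {..<d}"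
        using closed_full successor_closed_ideal_indices[OF J] by blast
      then show ?thesis using ideal_eq_UNIV_if_all_p[OF J(1)] by blast
    qed simp
  qed
qed

end

theorem proposition5p5:
  fixes cs :: "complex \<Rightarrow> 'a::{real_normed_algebra_1,banach} \<Rightarrow> 'a"
    and st :: "'a \<Rightarrow> 'a"
    and d :: nat and p :: "nat \<Rightarrow> 'a"
    and xs :: "complex \<Rightarrow> 'x::ab_group_add \<Rightarrow> 'x"
    and rm :: "'x \<Rightarrow> 'a \<Rightarrow> 'x" and ip :: "'x \<Rightarrow> 'x \<Rightarrow> 'a" and phi :: "'a \<Rightarrow> 'x \<Rightarrow> 'x"
  assumes "cstar_algebra cs st"
    and "d > 1"
    and "simple_sum_decomp cs st d p"
    and "hilbert_bimodule cs st xs rm ip phi"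
    and "full_module cs ip"
    and "finite_projective rm"
  shows "X_simple cs ip phi \<longleftrightarrow> irreducible_matrix d (assoc_matrix rm phi p)"
proof -
  interpret simple_sum_bimodule cs st d p xs rm ip phi
    using assms(1,3,4) by unfold_locales
  show ?thesis
    using X_simple_iff_successor_closed irreducible_matrix_iff_successor_closed[OF assms(2)]
    by simp
qed

end
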